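(* Let $m\ge 3$ and let $K\ne\Delta_{[m]}$ be a simplicial complex on $[m]$. Then $\chi(\mathrm{Bier}(K))=m-1$ if and only if $K$ is, up to relabeling of vertices, obtained from one of the three complexes on $[3]$ $$G_4=\{\varnothing,\{1\},\{2\},\{1,2\}\},\quad \Gamma_4=\{\varnothing,\{1\},\{2\},\{3\},\{1,2\},\{1,3\}\},\quad \Gamma_6=\{\varnothing,\{1\},\{2\},\{3\}\}$$ by a finite sequence of the following two operations: (1) taking a cone: a complex $R$ on $[n]$ is replaced by $\{\sigma,\sigma\cup\{n+1\}:\sigma\in R\}$ on $[n+1]$; (2) taking the Alexander dual: a complex $R\ne\Delta_{[n]}$ on $[n]$ is replaced by $R^\vee$, regarded as a complex on $[n]$ via $i'\mapsto i$.
   Context: A simplicial complex $K$ on $[m]=\{1,\dots,m\}$ is a nonempty family of subsets of $[m]$ closed under taking subsets (elements $i$ with $\{i\}\notin K$ are ghost vertices; e.g. $3$ is a ghost vertex of $G_4$). $V(K)=\{i:\{i\}\in K\}$. $\Delta_{[n]}=2^{[n]}$. Let $[n']=\{1',\dots,n'\}$ be a disjoint copy of $[n]$, $I'=\{i':i\in I\}$. For $K\ne\Delta_{[n]}$ on $[n]$ the Alexander dual $K^\vee$ is the complex on $[n']$ with $J'\in K^\vee$ iff $[n]\setminus J\notin K$. The Bier sphere $\mathrm{Bier}(K)$ is the complex on $[n]\sqcup[n']$ with faces $I\sqcup J'$, $I\in K$, $J'\in K^\vee$, $I\cap J=\varnothing$. The chromatic number $\chi(L)$ is the least number of colors in a map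 $c\colon V(L)\to C$ with $c(u)\ne c(v)$ whenever $\{u,v\}\in L$. *)

theory Defs
  imports Main
begin

definition simplicial_complex :: "nat \<Rightarrow> nat set set \<Rightarrow> bool" where
  "simplicial_complex m K \<longleftrightarrow> K \<noteq> {} \<and> (\<forall>\<sigma>\<in>K. \<sigma> \<subseteq> {1..m}) \<and>
     (\<forall>\<sigma>\<in>K. \<forall>\<tau>. \<tau> \<subseteq> \<sigma> \<longrightarrow> \<tau> \<in> K)"

definition full_simplex :: "nat \<Rightarrow> nat set set" where
  "full_simplex n = Pow {1..n}"

text \<open>Vertex set V(L) of a complex L (ghost vertices excluded).\<close>
definition vertices :: "'a set set \<Rightarrow> 'a set" where
  "vertices L = {v. {v} \<in> L}"

definition alex_dual :: "nat \<Rightarrow> nat set set \<Rightarrow> nat set set" where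
  "alex_dual n K = {J. J \<subseteq> {1..n} \<and> {1..n} - J \<notin> K}"

text \<open>Bier sphere on [n] disjoint-union [n']: i is Inl i, i' is Inr i.\<close>
definition bier :: "nat \<Rightarrow> nat set set \<Rightarrow> (nat + nat) set set" where
  "bier n K = {Inl ` I \<union> Inr ` J | I J. I \<in> K \<and> J \<in> alex_dual n K \<and> I \<inter> J = {}}"

definition chromatic_number :: "'a set set \<Rightarrow> nat" where
  "chromatic_number L = (LEAST k. \<exists>c :: 'a \<Rightarrow> nat.
      (\<forall>v\<in>vertices L. c v < k) \<and>
      (\<forall>u\<in>vertices L. \<forall>v\<in>vertices L. {u, v} \<in> L \<and> u \<noteq> v \<longrightarrow> c u \<noteq> c v))"

definition cone :: "nat \<Rightarrow> nat set set \<Rightarrow> nat set set" where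
  "cone n R = R \<union> {insert (n + 1) \<sigma> | \<sigma>. \<sigma> \<in> R}"

definition G4 :: "nat set set" where
  "G4 = {{}, {1}, {2}, {1, 2}}"

definition Gamma4 :: "nat set set" where
  "Gamma4 = {{}, {1}, {2}, {3}, {1, 2}, {1, 3}}"

definition Gamma6 :: "nat set set" where
  "Gamma6 = {{}, {1}, {2}, {3}}"

inductive obtainable :: "nat \<Rightarrow> nat set set \<Rightarrow> bool" where
  base_G4: "obtainable 3 G4"
| base_Gamma4: "obtainable 3 Gamma4"
| base_Gamma6: "obtainable 3 Gamma6"
| cone_step: "obtainable n R \<Longrightarrow> obtainable (n + 1) (cone n R)"
| dual_step: "obtainable n R \<Longrightarrow> R \<noteq> full_simplex n \<Longrightarrow> obtainable n (alex_dual n R)"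

end

theory Submission
  imports Defs
begin

text \<open>The complexes in question are exactly the relabelings of the model complexes K(T, G) on [m]:
  the vertices of G are ghosts, those of T are pairwise non-adjacent, and all other vertices are
  cone points, with (|T|, |G|) one of (0, 1), (0, 2), (2, 0), (3, 0). These are closed under cones
  and Alexander duals and contain G4, Gamma4 and Gamma6, and conversely every model complex arises
  from them.

  Bier(K) always has a face with m - 1 vertices, so at least m - 1 colours are needed. In a proper
  colouring with exactly m - 1 colours every such face is rainbow, so two such faces differing in one
  vertex give the exchanged vertices the same colour. Exchanging three vertices in this way is
  impossible, which shows that every face of K missing at least three vertices can be enlarged and
  that every non-face with at least three vertices has a non-face facet; hence K is a flag complex
  and non-adjacency of vertices of K is transitive. A further exchange argument shows that all
  vertices having a non-neighbour are pairwise non-adjacent, so K is a model complex, and counting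
  the ghosts and non-adjacent vertices against a face missing at most two vertices leaves only the
  four admissible types. Conversely, a model complex is coloured by enumerating its cone points and
  using one or two extra colours for the rest.\<close>

section \<open>Model complexes\<close>

definition model_complex :: "nat \<Rightarrow> nat set \<Rightarrow> nat set \<Rightarrow> nat set set" where
  "model_complex n T G = {\<sigma>. \<sigma> \<subseteq> {1..n} \<and> \<sigma> \<inter> G = {} \<and> card (\<sigma> \<inter> T) \<le> 1}"

definition admissible :: "nat \<Rightarrow> nat set \<Rightarrow> nat set \<Rightarrow> bool" where
  "admissible n T G \<longleftrightarrow> T \<subseteq> {1..n} \<and> G \<subseteq> {1..n} \<and> T \<inter> G = {} \<and>
     (T = {} \<and> card G \<in> {1, 2} \<or> G = {} \<and> card T \<in> {2, 3})"

lemma card_Int_pair_le_1_iff: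
  "a \<noteq> b \<Longrightarrow> card (\<sigma> \<inter> {a, b}) \<le> Suc 0 \<longleftrightarrow> \<not> (a \<in> \<sigma> \<and> b \<in> \<sigma>)"
  by (cases "a \<in> \<sigma>"; cases "b \<in> \<sigma>") (auto simp: Int_insert_right)

lemma card_Int_triple_le_1_iff:
  "a \<noteq> b \<Longrightarrow> a \<noteq> d \<Longrightarrow> b \<noteq> d \<Longrightarrow> card (\<sigma> \<inter> {a, b, d}) \<le> Suc 0 \<longleftrightarrow>
     \<not> (a \<in> \<sigma> \<and> b \<in> \<sigma>) \<and> \<not> (a \<in> \<sigma> \<and> d \<in> \<sigma>) \<and> \<not> (b \<in> \<sigma> \<and> d \<in> \<sigma>)"
  by (cases "a \<in> \<sigma>"; cases "b \<in> \<sigma>"; cases "d \<in> \<sigma>") (auto simp: Int_insert_right)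

lemma subset_1_to_3_cases:
  assumes "\<sigma> \<subseteq> {1..3::nat}"
  shows "\<sigma> \<in> {{}, {1}, {2}, {3}, {1,2}, {1,3}, {2,3}, {1,2,3}}"
proof -
  have "{1..3::nat} = {1, 2, 3}" by auto
  then have "\<sigma> \<in> Pow {1, 2, 3}" using assms by auto
  then show ?thesis by (simp add: Pow_insert) blast
qed

lemma G4_eq_model_complex: "G4 = model_complex 3 {} {3}"
proof (intro set_eqI iffI)
  fix \<sigma> assume "\<sigma> \<in> model_complex 3 {} {3}"
  then have "\<sigma> \<subseteq> {1..3}" "\<sigma> \<inter> {3} = {}" "card (\<sigma> \<inter> {}) \<le> 1"
    by (simp_all add: model_complex_def)
  from subset_1_to_3_cases[OF this(1)] this(2,3) show "\<sigma> \<in> G4"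
    by (auto simp: G4_def)
qed (auto simp: G4_def model_complex_def)

lemma Gamma4_eq_model_complex: "Gamma4 = model_complex 3 {2, 3} {}"
proof (intro set_eqI iffI)
  fix \<sigma> assume "\<sigma> \<in> model_complex 3 {2, 3} {}"
  then have "\<sigma> \<subseteq> {1..3}" "\<sigma> \<inter> {} = {}" "card (\<sigma> \<inter> {2, 3}) \<le> 1"
    by (simp_all add: model_complex_def)
  from subset_1_to_3_cases[OF this(1)] this(2,3) show "\<sigma> \<in> Gamma4"
    by (auto simp: Gamma4_def)
qed (auto simp: Gamma4_def model_complex_def)

lemma Gamma6_eq_model_complex: "Gamma6 = model_complex 3 {1, 2, 3} {}"
proof (intro set_eqI iffI)
  fix \<sigma> assume "\<sigma> \<in> model_complex 3 {1, 2, 3} {}"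
  then have "\<sigma> \<subseteq> {1..3}" "\<sigma> \<inter> {} = {}" "card (\<sigma> \<inter> {1, 2, 3}) \<le> 1"
    by (simp_all add: model_complex_def)
  from subset_1_to_3_cases[OF this(1)] this(2,3) show "\<sigma> \<in> Gamma6"
    by (auto simp: Gamma6_def)
qed (auto simp: Gamma6_def model_complex_def)

lemma cone_model_complex:
  assumes "T \<subseteq> {1..n}" "G \<subseteq> {1..n}"
  shows "cone n (model_complex n T G) = model_complex (n + 1) T G"
proof (intro set_eqI iffI)
  fix \<sigma> assume "\<sigma> \<in> cone n (model_complex n T G)"
  then consider "\<sigma> \<in> model_complex n T G"
    | \<tau> where "\<tau> \<in> model_complex n T G" "\<sigma> = insert (n + 1) \<tau>"
    unfolding cone_def by blast
  then show "\<sigma> \<in> model_complex (n + 1) T G"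
  proof cases
    case 2
    then have "\<sigma> \<inter> G = \<tau> \<inter> G" "\<sigma> \<inter> T = \<tau> \<inter> T" using assms by auto
    then show ?thesis using 2 unfolding model_complex_def by auto
  qed (auto simp: model_complex_def)
next
  fix \<sigma> assume \<sigma>: "\<sigma> \<in> model_complex (n + 1) T G"
  have "(\<sigma> - {n + 1}) \<inter> T = \<sigma> \<inter> T" "(\<sigma> - {n + 1}) \<inter> G = \<sigma> \<inter> G" using assms by auto
  then have "\<sigma> - {n + 1} \<in> model_complex n T G"
    using \<sigma> by (auto simp: model_complex_def subset_iff le_Suc_eq)
  then show "\<sigma> \<in> cone n (model_complex n T G)"
    unfolding cone_def by (cases "n + 1 \<in> \<sigma>") (auto simp: insert_absorb)
qed

lemma alex_dual_model_complex_ghost: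
  "g \<in> {1..n} \<Longrightarrow> alex_dual n (model_complex n {} {g}) = model_complex n {} {g}"
  unfolding alex_dual_def model_complex_def by auto

lemma alex_dual_model_complex_ghost_pair:
  "a \<noteq> b \<Longrightarrow> {a, b} \<subseteq> {1..n} \<Longrightarrow> alex_dual n (model_complex n {} {a, b}) = model_complex n {a, b} {}"
  unfolding alex_dual_def model_complex_def by (auto simp: card_Int_pair_le_1_iff)

lemma alex_dual_model_complex_pair:
  "a \<noteq> b \<Longrightarrow> {a, b} \<subseteq> {1..n} \<Longrightarrow> alex_dual n (model_complex n {a, b} {}) = model_complex n {} {a, b}"
  unfolding alex_dual_def model_complex_def by (auto simp: card_Int_pair_le_1_iff)

lemma alex_dual_model_complex_triple:
  "a \<noteq> b \<Longrightarrow> a \<noteq> d \<Longrightarrow> b \<noteq> d \<Longrightarrow> {a, b, d} \<subseteq> {1..n} \<Longrightarrow>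
    alex_dual n (model_complex n {a, b, d} {}) = model_complex n {a, b, d} {}"
  unfolding alex_dual_def model_complex_def by (auto simp: card_Int_triple_le_1_iff)

lemma admissible_alex_dual:
  assumes "admissible n T G"
  obtains T' G' where "admissible n T' G'" "alex_dual n (model_complex n T G) = model_complex n T' G'"
proof -
  have sub: "T \<subseteq> {1..n}" "G \<subseteq> {1..n}" using assms unfolding admissible_def by auto
  from assms consider "T = {}" "card G = 1" | "T = {}" "card G = 2"
    | "G = {}" "card T = 2" | "G = {}" "card T = 3"
    unfolding admissible_def by auto
  then show ?thesis
  proof cases
    case 1
    then obtain g where "G = {g}" by (auto simp: card_Suc_eq)
    then show ?thesis using that[OF assms] 1 sub alex_dual_model_complex_ghost by auto
  next
    case 2
    then obtain a b where ab: "G = {a, b}" "a \<noteq> b" by (auto simp: card_2_iff)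
    have "admissible n G {}" using 2 sub unfolding admissible_def by auto
    then show ?thesis using that 2 ab sub alex_dual_model_complex_ghost_pair by auto
  next
    case 3
    then obtain a b where ab: "T = {a, b}" "a \<noteq> b" by (auto simp: card_2_iff)
    have "admissible n {} T" using 3 sub unfolding admissible_def by auto
    then show ?thesis using that 3 ab sub alex_dual_model_complex_pair by auto
  next
    case 4
    then obtain a b d where "T = {a, b, d}" "a \<noteq> b" "a \<noteq> d" "b \<noteq> d" by (auto simp: card_3_iff)
    then show ?thesis using that[OF assms] 4 sub alex_dual_model_complex_triple by auto
  qed
qed

lemma obtainable_imp_model_complex:
  "obtainable n R \<Longrightarrow> \<exists>T G. admissible n T G \<and> R = model_complex n T G"
proof (induction rule: obtainable.induct)
  case base_G4
  show ?case unfolding G4_eq_model_complex admissible_def by (intro exI[of _ "{}"] exI[of _ "{3}"]) auto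
next
  case base_Gamma4
  show ?case unfolding Gamma4_eq_model_complex admissible_def by (intro exI[of _ "{2, 3}"] exI[of _ "{}"]) auto
next
  case base_Gamma6
  show ?case unfolding Gamma6_eq_model_complex admissible_def by (intro exI[of _ "{1, 2, 3}"] exI[of _ "{}"]) auto
next
  case (cone_step n R)
  then obtain T G where TG: "admissible n T G" "R = model_complex n T G" by blast
  then have "admissible (n + 1) T G" unfolding admissible_def by auto
  moreover have "cone n R = model_complex (n + 1) T G"
    using TG cone_model_complex unfolding admissible_def by auto
  ultimately show ?case by blast
next
  case (dual_step n R)
  then show ?case by (metis admissible_alex_dual)
qed

lemma image_model_complex_subset:
  assumes "bij_betw \<pi> {1..n} {1..n}" "T \<subseteq> {1..n}" "G \<subseteq> {1..n}"
  shows "(\<lambda>\<sigma>. \<pi> ` \<sigma>) ` model_complex n T G \<subseteq> model_complex n (\<pi> ` T) (\<pi> ` G)"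
proof
  fix \<sigma> assume "\<sigma> \<in> (\<lambda>\<sigma>. \<pi> ` \<sigma>) ` model_complex n T G"
  then obtain \<tau> where \<tau>: "\<tau> \<in> model_complex n T G" "\<sigma> = \<pi> ` \<tau>" by blast
  have inj: "inj_on \<pi> {1..n}" and onto: "\<pi> ` {1..n} = {1..n}"
    using assms(1) by (auto simp: bij_betw_def)
  have \<tau>_sub: "\<tau> \<subseteq> {1..n}" using \<tau> unfolding model_complex_def by auto
  have "\<sigma> \<inter> \<pi> ` G = \<pi> ` (\<tau> \<inter> G)" "\<sigma> \<inter> \<pi> ` T = \<pi> ` (\<tau> \<inter> T)"
    using inj_on_image_Int[OF inj \<tau>_sub assms(3)] inj_on_image_Int[OF inj \<tau>_sub assms(2)] \<tau>(2)
    by simp_all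
  moreover have "card (\<pi> ` (\<tau> \<inter> T)) = card (\<tau> \<inter> T)"
    using \<tau>_sub by (intro card_image inj_on_subset[OF inj]) auto
  moreover have "\<sigma> \<subseteq> {1..n}" using \<tau>_sub onto \<tau>(2) image_mono by blast
  ultimately show "\<sigma> \<in> model_complex n (\<pi> ` T) (\<pi> ` G)"
    using \<tau>(1) unfolding model_complex_def by auto
qed

lemma image_model_complex:
  assumes \<pi>: "bij_betw \<pi> {1..n} {1..n}" and T: "T \<subseteq> {1..n}" and G: "G \<subseteq> {1..n}"
  shows "(\<lambda>\<sigma>. \<pi> ` \<sigma>) ` model_complex n T G = model_complex n (\<pi> ` T) (\<pi> ` G)"
proof
  show "model_complex n (\<pi> ` T) (\<pi> ` G) \<subseteq> (\<lambda>\<sigma>. \<pi> ` \<sigma>) ` model_complex n T G"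
  proof
    fix \<sigma> assume \<sigma>: "\<sigma> \<in> model_complex n (\<pi> ` T) (\<pi> ` G)"
    let ?\<psi> = "inv_into {1..n} \<pi>"
    have inj: "inj_on \<pi> {1..n}" and onto: "\<pi> ` {1..n} = {1..n}"
      using \<pi> by (auto simp: bij_betw_def)
    have "\<pi> ` T \<subseteq> {1..n}" "\<pi> ` G \<subseteq> {1..n}"
      using image_mono[OF T, of \<pi>] image_mono[OF G, of \<pi>] onto by simp_all
    then have "?\<psi> ` \<sigma> \<in> model_complex n (?\<psi> ` \<pi> ` T) (?\<psi> ` \<pi> ` G)"
      by (rule subsetD[OF image_model_complex_subset[OF bij_betw_inv_into[OF \<pi>]]]) (rule imageI[OF \<sigma>])
    then have "?\<psi> ` \<sigma> \<in> model_complex n T G"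
      by (simp only: inv_into_image_cancel[OF inj T] inv_into_image_cancel[OF inj G])
    moreover have "\<sigma> = \<pi> ` ?\<psi> ` \<sigma>"
      using \<sigma> onto by (intro image_inv_into_cancel[symmetric]) (auto simp: model_complex_def)
    ultimately show "\<sigma> \<in> (\<lambda>\<sigma>. \<pi> ` \<sigma>) ` model_complex n T G" by (rule rev_image_eqI)
  qed
qed (rule image_model_complex_subset[OF assms])

lemma admissible_image:
  assumes \<pi>: "bij_betw \<pi> {1..n} {1..n}" and TG: "admissible n T G"
  shows "admissible n (\<pi> ` T) (\<pi> ` G)"
proof -
  have inj: "inj_on \<pi> {1..n}" and onto: "\<pi> ` {1..n} = {1..n}"
    using \<pi> by (auto simp: bij_betw_def)
  have sub: "T \<subseteq> {1..n}" "G \<subseteq> {1..n}" "T \<inter> G = {}" using TG unfolding admissible_def by auto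
  have "card (\<pi> ` T) = card T" "card (\<pi> ` G) = card G"
    using card_image inj_on_subset[OF inj] sub by metis+
  moreover have "\<pi> ` T \<inter> \<pi> ` G = {}" using inj_on_image_Int[OF inj sub(1,2)] sub(3) by simp
  moreover have "\<pi> ` T \<subseteq> {1..n}" "\<pi> ` G \<subseteq> {1..n}"
    using image_mono[OF sub(1), of \<pi>] image_mono[OF sub(2), of \<pi>] onto by simp_all
  ultimately show ?thesis using TG unfolding admissible_def by auto
qed

lemma exists_permutation_mapping:
  assumes "A \<subseteq> {1..n::nat}" "B \<subseteq> {1..n}" "card A = card B"
  obtains \<pi> where "bij_betw \<pi> {1..n} {1..n}" "\<pi> ` A = B"
proof -
  have fin: "finite A" "finite B" using assms finite_subset by auto
  obtain f where f: "bij_betw f A B" using finite_same_card_bij[OF fin assms(3)] by blast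
  have "card ({1..n} - A) = card ({1..n} - B)"
    using assms fin by (simp add: card_Diff_subset)
  then obtain g where g: "bij_betw g ({1..n} - A) ({1..n} - B)"
    by (meson finite_same_card_bij finite_Diff finite_atLeastAtMost)
  define \<pi> where "\<pi> x = (if x \<in> A then f x else g x)" for x
  have "bij_betw \<pi> A B" using f by (rule bij_betw_cong[THEN iffD1, rotated]) (simp add: \<pi>_def)
  moreover have "bij_betw \<pi> ({1..n} - A) ({1..n} - B)"
    using g by (rule bij_betw_cong[THEN iffD1, rotated]) (simp add: \<pi>_def)
  ultimately have "bij_betw \<pi> (A \<union> ({1..n} - A)) (B \<union> ({1..n} - B))"
    by (rule bij_betw_combine) auto
  then have "bij_betw \<pi> {1..n} {1..n}" using assms by (simp add: Un_absorb1 Un_Diff_cancel)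
  moreover have "\<pi> ` A = B" using \<open>bij_betw \<pi> A B\<close> by (simp add: bij_betw_def)
  ultimately show ?thesis using that by blast
qed

lemma obtainable_model_complex_from_3:
  assumes "obtainable 3 (model_complex 3 T G)" "T \<subseteq> {1..3}" "G \<subseteq> {1..3}" "3 \<le> n"
  shows "obtainable n (model_complex n T G)"
  using assms(4)
proof (induction n rule: dec_induct)
  case (step n)
  have "T \<subseteq> {1..n}" "G \<subseteq> {1..n}" using assms(2,3) step.hyps(1) by auto
  then show ?case using obtainable.cone_step[OF step.IH] cone_model_complex by simp
qed (rule assms(1))

lemma obtainable_model_complex_representatives:
  assumes "3 \<le> n"
  shows "obtainable n (model_complex n {} {3})" "obtainable n (model_complex n {} {2, 3})"
    "obtainable n (model_complex n {2, 3} {})" "obtainable n (model_complex n {1, 2, 3} {})"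
proof -
  have not_full: "model_complex 3 {2, 3} {} \<noteq> full_simplex 3"
  proof
    assume "model_complex 3 {2, 3} {} = full_simplex 3"
    moreover have "{2, 3} \<in> full_simplex 3" by (auto simp: full_simplex_def)
    moreover have "{2, 3} \<notin> model_complex 3 {2, 3} {}" by (simp add: model_complex_def)
    ultimately show False by simp
  qed
  have "obtainable 3 (alex_dual 3 (model_complex 3 {2, 3} {}))"
    using obtainable.dual_step[OF obtainable.base_Gamma4[unfolded Gamma4_eq_model_complex] not_full] .
  then have "obtainable 3 (model_complex 3 {} {2, 3})" by (simp add: alex_dual_model_complex_pair)
  then show "obtainable n (model_complex n {} {2, 3})"
    by (rule obtainable_model_complex_from_3) (use assms in auto)
  show "obtainable n (model_complex n {} {3})"
    by (rule obtainable_model_complex_from_3) (use obtainable.base_G4 G4_eq_model_complex assms in auto)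
  show "obtainable n (model_complex n {2, 3} {})"
    by (rule obtainable_model_complex_from_3) (use obtainable.base_Gamma4 Gamma4_eq_model_complex assms in auto)
  show "obtainable n (model_complex n {1, 2, 3} {})"
    by (rule obtainable_model_complex_from_3) (use obtainable.base_Gamma6 Gamma6_eq_model_complex assms in auto)
qed

lemma admissible_iff_obtainable_up_to_relabeling:
  assumes "3 \<le> n"
  shows "(\<exists>T G. admissible n T G \<and> K = model_complex n T G) \<longleftrightarrow>
    (\<exists>\<pi> R. bij_betw \<pi> {1..n} {1..n} \<and> obtainable n R \<and> K = (\<lambda>\<sigma>. \<pi> ` \<sigma>) ` R)"
proof
  assume "\<exists>\<pi> R. bij_betw \<pi> {1..n} {1..n} \<and> obtainable n R \<and> K = (\<lambda>\<sigma>. \<pi> ` \<sigma>) ` R"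
  then obtain \<pi> R where \<pi>: "bij_betw \<pi> {1..n} {1..n}" and R: "obtainable n R" "K = (\<lambda>\<sigma>. \<pi> ` \<sigma>) ` R"
    by blast
  obtain T G where TG: "admissible n T G" "R = model_complex n T G"
    using obtainable_imp_model_complex[OF R(1)] by blast
  have "K = model_complex n (\<pi> ` T) (\<pi> ` G)"
    using R(2) TG image_model_complex[OF \<pi>] unfolding admissible_def by auto
  then show "\<exists>T G. admissible n T G \<and> K = model_complex n T G"
    using admissible_image[OF \<pi> TG(1)] by blast
next
  assume "\<exists>T G. admissible n T G \<and> K = model_complex n T G"
  then obtain T G where TG: "admissible n T G" and K: "K = model_complex n T G" by blast
  have relabel: "\<exists>\<pi> R. bij_betw \<pi> {1..n} {1..n} \<and> obtainable n R \<and> K = (\<lambda>\<sigma>. \<pi> ` \<sigma>) ` R"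
    if "obtainable n (model_complex n T0 G0)" "T0 \<subseteq> {1..n}" "G0 \<subseteq> {1..n}"
      "bij_betw \<pi> {1..n} {1..n}" "\<pi> ` T0 = T" "\<pi> ` G0 = G" for T0 G0 \<pi>
  proof -
    have "K = (\<lambda>\<sigma>. \<pi> ` \<sigma>) ` model_complex n T0 G0"
      using image_model_complex[OF that(4,2,3)] that(5,6) K by simp
    then show ?thesis using that(1,4) by blast
  qed
  from TG consider "T = {}" "card G = 1" | "T = {}" "card G = 2"
    | "G = {}" "card T = 2" | "G = {}" "card T = 3"
    unfolding admissible_def by auto
  then show "\<exists>\<pi> R. bij_betw \<pi> {1..n} {1..n} \<and> obtainable n R \<and> K = (\<lambda>\<sigma>. \<pi> ` \<sigma>) ` R"
  proof cases
    case 1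
    obtain \<pi> where "bij_betw \<pi> {1..n} {1..n}" "\<pi> ` {3} = G"
      by (rule exists_permutation_mapping[of "{3}" n G]) (use TG assms 1 in \<open>auto simp: admissible_def\<close>)
    then show ?thesis
      by (intro relabel[OF obtainable_model_complex_representatives(1)[OF assms]]) (use 1 assms in auto)
  next
    case 2
    obtain \<pi> where "bij_betw \<pi> {1..n} {1..n}" "\<pi> ` {2, 3} = G"
      by (rule exists_permutation_mapping[of "{2, 3}" n G]) (use TG assms 2 in \<open>auto simp: admissible_def\<close>)
    then show ?thesis
      by (intro relabel[OF obtainable_model_complex_representatives(2)[OF assms]]) (use 2 assms in auto)
  next
    case 3
    obtain \<pi> where "bij_betw \<pi> {1..n} {1..n}" "\<pi> ` {2, 3} = T"
      by (rule exists_permutation_mapping[of "{2, 3}" n T]) (use TG assms 3 in \<open>auto simp: admissible_def\<close>)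
    then show ?thesis
      by (intro relabel[OF obtainable_model_complex_representatives(3)[OF assms]]) (use 3 assms in auto)
  next
    case 4
    obtain \<pi> where "bij_betw \<pi> {1..n} {1..n}" "\<pi> ` {1, 2, 3} = T"
      by (rule exists_permutation_mapping[of "{1, 2, 3}" n T]) (use TG assms 4 in \<open>auto simp: admissible_def\<close>)
    then show ?thesis
      by (intro relabel[OF obtainable_model_complex_representatives(4)[OF assms]]) (use 4 assms in auto)
  qed
qed

section \<open>Bier spheres and their colourings\<close>

definition proper_colouring :: "'a set set \<Rightarrow> nat \<Rightarrow> ('a \<Rightarrow> nat) \<Rightarrow> bool" where
  "proper_colouring L k c \<longleftrightarrow> (\<forall>v\<in>vertices L. c v < k) \<and>
      (\<forall>u\<in>vertices L. \<forall>v\<in>vertices L. {u, v} \<in> L \<and> u \<noteq> v \<longrightarrow> c u \<noteq> c v)"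

lemma chromatic_number_eq_Least: "chromatic_number L = (LEAST k. \<exists>c. proper_colouring L k c)"
  unfolding chromatic_number_def proper_colouring_def ..

definition label :: "nat + nat \<Rightarrow> nat" where
  "label = case_sum id id"

lemma label_simps [simp]: "label (Inl i) = i" "label (Inr i) = i"
  by (simp_all add: label_def)

lemma sum_set_decompose: "F = Inl ` {x. Inl x \<in> F} \<union> Inr ` {x. Inr x \<in> F}"
  by (rule set_eqI) (case_tac x; auto)

lemma card_Inl_Inr_image: "finite I \<Longrightarrow> finite J \<Longrightarrow> card (Inl ` I \<union> Inr ` J) = card I + card J"
  by (subst card_Un_disjoint) (auto simp: card_image)

lemma obtain_three_distinct:
  assumes "3 \<le> card U"
  obtains x y z where "x \<in> U" "y \<in> U" "z \<in> U" "x \<noteq> y" "x \<noteq> z" "y \<noteq> z"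
proof -
  obtain V where "V \<subseteq> U" "card V = 3" using obtain_subset_with_card_n[OF assms] by blast
  then show ?thesis using that by (auto simp: card_3_iff)
qed

locale bier_sphere =
  fixes m :: nat and K :: "nat set set"
  assumes three_le_m: "3 \<le> m" and simplicial: "simplicial_complex m K" and not_full: "K \<noteq> full_simplex m"
begin

abbreviation dual :: "nat set set" where
  "dual \<equiv> alex_dual m K"

lemma face_subset: "\<sigma> \<in> K \<Longrightarrow> \<sigma> \<subseteq> {1..m}"
  using simplicial unfolding simplicial_complex_def by auto

lemma face_downward_closed: "\<sigma> \<in> K \<Longrightarrow> \<tau> \<subseteq> \<sigma> \<Longrightarrow> \<tau> \<in> K"
  using simplicial unfolding simplicial_complex_def by auto

lemma empty_face: "{} \<in> K"
  using simplicial unfolding simplicial_complex_def by auto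

lemma finite_face: "\<sigma> \<in> K \<Longrightarrow> finite \<sigma>"
  using face_subset finite_subset by blast

lemma ground_set_not_face: "{1..m} \<notin> K"
proof
  assume "{1..m} \<in> K"
  then have "Pow {1..m} \<subseteq> K" using face_downward_closed by auto
  moreover have "K \<subseteq> Pow {1..m}" using face_subset by auto
  ultimately show False using not_full unfolding full_simplex_def by auto
qed

lemma dual_face_iff: "J \<in> dual \<longleftrightarrow> J \<subseteq> {1..m} \<and> {1..m} - J \<notin> K"
  unfolding alex_dual_def by auto

lemma dual_downward_closed: "J \<in> dual \<Longrightarrow> J' \<subseteq> J \<Longrightarrow> J' \<in> dual"
  unfolding alex_dual_def using face_downward_closed by blast

lemma empty_dual_face: "{} \<in> dual"
  using ground_set_not_face unfolding alex_dual_def by auto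

lemma Inl_Inr_image_eq_iff: "Inl ` I \<union> Inr ` J = Inl ` I' \<union> Inr ` J' \<longleftrightarrow> I = I' \<and> J = J'"
proof
  assume eq: "Inl ` I \<union> Inr ` J = Inl ` I' \<union> Inr ` J'"
  have "I = {x. Inl x \<in> Inl ` I \<union> Inr ` J}" "J = {x. Inr x \<in> Inl ` I \<union> Inr ` J}"
    "I' = {x. Inl x \<in> Inl ` I' \<union> Inr ` J'}" "J' = {x. Inr x \<in> Inl ` I' \<union> Inr ` J'}"
    by auto
  then show "I = I' \<and> J = J'" unfolding eq by simp
qed simp

lemma bier_face_iff: "Inl ` I \<union> Inr ` J \<in> bier m K \<longleftrightarrow> I \<in> K \<and> J \<in> dual \<and> I \<inter> J = {}"
proof
  assume "Inl ` I \<union> Inr ` J \<in> bier m K"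
  then obtain I' J' where "Inl ` I \<union> Inr ` J = Inl ` I' \<union> Inr ` J'" "I' \<in> K" "J' \<in> dual" "I' \<inter> J' = {}"
    unfolding bier_def by blast
  then show "I \<in> K \<and> J \<in> dual \<and> I \<inter> J = {}" unfolding Inl_Inr_image_eq_iff by simp
qed (unfold bier_def, blast)

lemma bier_downward_closed:
  assumes "F \<in> bier m K" "F' \<subseteq> F"
  shows "F' \<in> bier m K"
proof -
  obtain I J where F: "F = Inl ` I \<union> Inr ` J" "I \<in> K" "J \<in> dual" "I \<inter> J = {}"
    using assms(1) unfolding bier_def by blast
  have sub: "{x. Inl x \<in> F'} \<subseteq> I" "{x. Inr x \<in> F'} \<subseteq> J" using assms(2) F(1) by auto
  then have "Inl ` {x. Inl x \<in> F'} \<union> Inr ` {x. Inr x \<in> F'} \<in> bier m K"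
    unfolding bier_face_iff using face_downward_closed[OF F(2)] dual_downward_closed[OF F(3)] F(4)
    by blast
  then show ?thesis using sum_set_decompose[of F'] by simp
qed

lemma Inl_vertex_iff: "Inl x \<in> vertices (bier m K) \<longleftrightarrow> {x} \<in> K"
  using bier_face_iff[of "{x}" "{}"] empty_dual_face unfolding vertices_def by simp

lemma Inr_vertex_iff: "Inr x \<in> vertices (bier m K) \<longleftrightarrow> {x} \<in> dual"
  using bier_face_iff[of "{}" "{x}"] empty_face unfolding vertices_def by simp

lemma Inl_Inl_edge_iff: "{Inl x, Inl y} \<in> bier m K \<longleftrightarrow> {x, y} \<in> K"
  using bier_face_iff[of "{x, y}" "{}"] empty_dual_face by simp

lemma Inr_Inr_edge_iff: "{Inr x, Inr y} \<in> bier m K \<longleftrightarrow> {x, y} \<in> dual"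
  using bier_face_iff[of "{}" "{x, y}"] empty_face by simp

lemma Inl_Inr_edge_iff: "{Inl x, Inr y} \<in> bier m K \<longleftrightarrow> {x} \<in> K \<and> {y} \<in> dual \<and> x \<noteq> y"
proof -
  have "Inl ` {x} \<union> Inr ` {y} = {Inl x, Inr y}" by auto
  then show ?thesis using bier_face_iff[of "{x}" "{y}"] by auto
qed

lemma vertex_of_bier_face: "F \<in> bier m K \<Longrightarrow> v \<in> F \<Longrightarrow> v \<in> vertices (bier m K)"
  unfolding vertices_def using bier_downward_closed[of F "{v}"] by simp

lemma label_injective_on_edge:
  assumes "{u, v} \<in> bier m K" "u \<noteq> v"
  shows "label u \<noteq> label v"
proof
  assume "label u = label v"
  with assms(2) obtain x where "{u, v} = Inl ` {x} \<union> Inr ` {x}" by (cases u; cases v) auto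
  then show False using assms(1) bier_face_iff by (metis Int_absorb insert_not_empty)
qed

lemma proper_colouring_inj_on_face:
  assumes "proper_colouring (bier m K) k c" "F \<in> bier m K"
  shows "inj_on c F"
proof (rule inj_onI, rule ccontr)
  fix u v assume uv: "u \<in> F" "v \<in> F" "c u = c v" "u \<noteq> v"
  have "{u, v} \<in> bier m K" using bier_downward_closed[OF assms(2)] uv by simp
  then show False
    using assms uv vertex_of_bier_face unfolding proper_colouring_def by blast
qed

lemma card_face_le_colours:
  assumes "proper_colouring (bier m K) k c" "F \<in> bier m K"
  shows "card F \<le> k"
proof -
  have "c ` F \<subseteq> {..<k}" using assms vertex_of_bier_face unfolding proper_colouring_def by auto
  then have "card (c ` F) \<le> k" using card_mono[of "{..<k}"] by fastforce
  then show ?thesis using card_image[OF proper_colouring_inj_on_face[OF assms]] by simp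
qed

text \<open>A face I of K that is maximal with respect to cardinality, together with all but one vertex
  of its complement in the dual, is a face of Bier(K) with m - 1 vertices.\<close>

lemma bier_face_with_m_minus_1_vertices: "\<exists>F\<in>bier m K. card F = m - 1"
proof -
  have "card I < Suc m" if "I \<in> K" for I
    using card_mono[OF _ face_subset[OF that]] by simp
  then obtain I where I: "I \<in> K" and max: "\<And>I'. I' \<in> K \<Longrightarrow> card I' \<le> card I"
    using ex_has_greatest_nat[of "\<lambda>I. I \<in> K" "{}" card "Suc m"] empty_face by blast
  have I_sub: "I \<subseteq> {1..m}" and fin: "finite I" using I face_subset finite_face by auto
  moreover have "I \<noteq> {1..m}" using ground_set_not_face I by auto
  ultimately obtain k where k: "k \<in> {1..m}" "k \<notin> I" by blast
  have "insert k I \<notin> K" using max[of "insert k I"] k fin by auto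
  moreover have "{1..m} - ({1..m} - I - {k}) = insert k I" using I_sub k by auto
  ultimately have "{1..m} - I - {k} \<in> dual" unfolding dual_face_iff by auto
  then have face: "Inl ` I \<union> Inr ` ({1..m} - I - {k}) \<in> bier m K"
    using bier_face_iff I by auto
  have "I \<subset> {1..m}" using I_sub k by blast
  then have "card I < m" using psubset_card_mono[of "{1..m}" I] by simp
  moreover have "card ({1..m} - I - {k}) = m - card I - 1"
    using I_sub fin k by (simp add: card_Diff_subset)
  ultimately have "card (Inl ` I \<union> Inr ` ({1..m} - I - {k})) = m - 1"
    by (simp add: card_Inl_Inr_image[OF fin])
  then show ?thesis using face by blast
qed

lemma proper_colouring_lower_bound: "proper_colouring (bier m K) k c \<Longrightarrow> m - 1 \<le> k"
  using bier_face_with_m_minus_1_vertices card_face_le_colours by metis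

lemma label_vertex_in_ground_set: "v \<in> vertices (bier m K) \<Longrightarrow> label v \<in> {1..m}"
  using face_subset[of "{label v}"] dual_face_iff[of "{label v}"]
  by (cases v) (auto simp: Inl_vertex_iff Inr_vertex_iff)

lemma proper_colouring_label: "proper_colouring (bier m K) (m + 1) label"
  unfolding proper_colouring_def using label_vertex_in_ground_set label_injective_on_edge
  by (metis atLeastAtMost_iff less_Suc_eq_le Suc_eq_plus1)

lemma chromatic_number_bier_eq_iff:
  "chromatic_number (bier m K) = m - 1 \<longleftrightarrow> (\<exists>c. proper_colouring (bier m K) (m - 1) c)"
proof
  assume "chromatic_number (bier m K) = m - 1"
  then show "\<exists>c. proper_colouring (bier m K) (m - 1) c"
    using LeastI_ex[of "\<lambda>k. \<exists>c. proper_colouring (bier m K) k c"] proper_colouring_label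
    unfolding chromatic_number_eq_Least by metis
next
  assume "\<exists>c. proper_colouring (bier m K) (m - 1) c"
  then show "chromatic_number (bier m K) = m - 1"
    unfolding chromatic_number_eq_Least
  proof (intro Least_equality)
    fix k assume "\<exists>c. proper_colouring (bier m K) k c"
    then show "m - 1 \<le> k" using proper_colouring_lower_bound by blast
  qed
qed

definition nonadjacent :: "nat \<Rightarrow> nat \<Rightarrow> bool" where
  "nonadjacent x y \<longleftrightarrow> x \<noteq> y \<and> {x} \<in> K \<and> {y} \<in> K \<and> {x, y} \<notin> K"

definition ghosts :: "nat set" where
  "ghosts = {i \<in> {1..m}. {i} \<notin> K}"

definition loose_vertices :: "nat set" where
  "loose_vertices = {x. \<exists>y. nonadjacent x y}"

lemma nonadjacent_sym: "nonadjacent x y \<Longrightarrow> nonadjacent y x"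
  unfolding nonadjacent_def by (auto simp: insert_commute)

lemma nonadjacent_in_ground_set: "nonadjacent x y \<Longrightarrow> x \<in> {1..m}"
  unfolding nonadjacent_def using face_subset by blast

end

section \<open>Bier spheres coloured with m - 1 colours\<close>

locale bier_colouring = bier_sphere +
  fixes c :: "nat + nat \<Rightarrow> nat"
  assumes proper: "proper_colouring (bier m K) (m - 1) c"
begin

text \<open>A face with m - 1 vertices sees every colour exactly once, so exchanging one of its vertices
  for another one keeps the colour.\<close>

lemma exchange_same_colour:
  assumes F1: "F1 \<in> bier m K" and F2: "F2 \<in> bier m K" and card_F1: "card F1 = m - 1"
    and u: "u \<in> F1" and v: "v \<in> F2" and eq: "F1 - {u} = F2 - {v}"
  shows "c u = c v"
proof (rule ccontr)
  assume ne: "c u \<noteq> c v"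
  have inj1: "inj_on c F1" and inj2: "inj_on c F2"
    using proper_colouring_inj_on_face[OF proper] F1 F2 by auto
  have "c ` F1 \<subseteq> {..<m - 1}"
    using proper vertex_of_bier_face[OF F1] unfolding proper_colouring_def by auto
  moreover have "card (c ` F1) = m - 1" using card_image[OF inj1] card_F1 by simp
  ultimately have all: "c ` F1 = {..<m - 1}" using card_subset_eq by (metis card_lessThan finite_lessThan)
  have "c v < m - 1" using proper vertex_of_bier_face[OF F2 v] unfolding proper_colouring_def by auto
  then obtain w where w: "w \<in> F1" "c w = c v" using all by (metis imageE lessThan_iff)
  then have "w \<in> F2" "w \<noteq> v" using eq ne by blast+
  then show False using inj2 v w(2) unfolding inj_on_def by blast
qed

lemma Inl_edge_colours_differ:
  assumes "x \<noteq> y" "{x, y} \<in> K"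
  shows "c (Inl x) \<noteq> c (Inl y)"
proof -
  have "Inl ` {x, y} \<union> Inr ` {} \<in> bier m K"
    using assms empty_dual_face by (subst bier_face_iff) auto
  then have "inj_on c (Inl ` {x, y} \<union> Inr ` {})" using proper_colouring_inj_on_face[OF proper] by blast
  then show ?thesis using assms(1) unfolding inj_on_def by auto
qed

lemma Inr_edge_colours_differ:
  assumes "x \<noteq> y" "{x, y} \<in> dual"
  shows "c (Inr x) \<noteq> c (Inr y)"
proof -
  have "Inl ` {} \<union> Inr ` {x, y} \<in> bier m K"
    using assms empty_face by (subst bier_face_iff) auto
  then have "inj_on c (Inl ` {} \<union> Inr ` {x, y})" using proper_colouring_inj_on_face[OF proper] by blast
  then show ?thesis using assms(1) unfolding inj_on_def by auto
qed

text \<open>If the faces P \<union> e ` (U - {k}) all have m - 1 vertices, then by exchange all e k with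
  k \<in> U carry the same colour; as two of them share a face, U has at most two elements.\<close>

lemma no_three_mutual_exchanges:
  fixes e :: "nat \<Rightarrow> nat + nat"
  assumes inj: "inj e"
    and faces: "\<And>k. k \<in> U \<Longrightarrow> P \<union> e ` (U - {k}) \<in> bier m K \<and> card (P \<union> e ` (U - {k})) = m - 1"
    and disjoint: "\<And>k. e k \<notin> P"
    and xyz: "x \<in> U" "y \<in> U" "z \<in> U" "x \<noteq> y" "x \<noteq> z" "y \<noteq> z"
  shows False
proof -
  let ?F = "\<lambda>k. P \<union> e ` (U - {k})"
  have e_eq: "e a = e b \<longleftrightarrow> a = b" for a b using inj by (simp add: inj_eq)
  have "?F y - {e x} = ?F x - {e y}" using disjoint e_eq by auto
  moreover have "e x \<in> ?F y" "e y \<in> ?F x" using xyz by auto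
  ultimately have "c (e x) = c (e y)" using exchange_same_colour faces xyz by metis
  moreover have "inj_on c (?F z)" using proper_colouring_inj_on_face[OF proper] faces xyz by blast
  moreover have "e x \<in> ?F z" "e y \<in> ?F z" "e x \<noteq> e y" using xyz e_eq by auto
  ultimately show False unfolding inj_on_def by blast
qed

lemma face_extends_by_vertex:
  assumes I: "I \<in> K" and three: "3 \<le> card ({1..m} - I)"
  shows "\<exists>k\<in>{1..m} - I. insert k I \<in> K"
proof (rule ccontr)
  assume "\<not> ?thesis"
  then have not_face: "insert k I \<notin> K" if "k \<in> {1..m} - I" for k using that by blast
  let ?U = "{1..m} - I"
  have I_sub: "I \<subseteq> {1..m}" and fin: "finite I" using I face_subset finite_face by auto
  have card_U: "card ?U = m - card I" using I_sub fin by (simp add: card_Diff_subset)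
  obtain x y z where xyz: "x \<in> ?U" "y \<in> ?U" "z \<in> ?U" "x \<noteq> y" "x \<noteq> z" "y \<noteq> z"
    using obtain_three_distinct[OF three] by blast
  have faces: "Inl ` I \<union> Inr ` (?U - {k}) \<in> bier m K \<and> card (Inl ` I \<union> Inr ` (?U - {k})) = m - 1"
    if k: "k \<in> ?U" for k
  proof
    have "{1..m} - (?U - {k}) = insert k I" using I_sub k by auto
    then have "?U - {k} \<in> dual" using not_face[OF k] dual_face_iff by auto
    then show "Inl ` I \<union> Inr ` (?U - {k}) \<in> bier m K" using bier_face_iff I by auto
    have "card (?U - {k}) = card ?U - 1" using k by (simp add: card_Diff_singleton)
    then have "card I + card (?U - {k}) = m - 1" using card_U three by simp
    then show "card (Inl ` I \<union> Inr ` (?U - {k})) = m - 1"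
      by (simp add: card_Inl_Inr_image[OF fin])
  qed
  show False by (rule no_three_mutual_exchanges[of Inr ?U "Inl ` I" x y z]) (use faces xyz in auto)
qed

lemma nonface_remove_vertex_nonface:
  assumes N: "N \<subseteq> {1..m}" "N \<notin> K" and three: "3 \<le> card N"
  shows "\<exists>k\<in>N. N - {k} \<notin> K"
proof (rule ccontr)
  assume "\<not> ?thesis"
  then have face: "N - {k} \<in> K" if "k \<in> N" for k using that by blast
  have fin: "finite N" using N(1) finite_subset by blast
  let ?J = "{1..m} - N"
  have "{1..m} - ?J = N" using N by auto
  then have J: "?J \<in> dual" using N dual_face_iff by auto
  have card_J: "card ?J = m - card N" using N fin by (simp add: card_Diff_subset)
  have "card N \<le> m" using card_mono[OF _ N(1)] by simp
  obtain x y z where xyz: "x \<in> N" "y \<in> N" "z \<in> N" "x \<noteq> y" "x \<noteq> z" "y \<noteq> z"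
    using obtain_three_distinct[OF three] by blast
  have faces: "Inr ` ?J \<union> Inl ` (N - {k}) \<in> bier m K \<and> card (Inr ` ?J \<union> Inl ` (N - {k})) = m - 1"
    if k: "k \<in> N" for k
  proof
    have eq: "Inr ` ?J \<union> Inl ` (N - {k}) = Inl ` (N - {k}) \<union> Inr ` ?J" by auto
    show "Inr ` ?J \<union> Inl ` (N - {k}) \<in> bier m K" unfolding eq using bier_face_iff face[OF k] J by auto
    have "card (N - {k}) = card N - 1" using k by (simp add: card_Diff_singleton)
    then have "card (N - {k}) + card ?J = m - 1" using card_J three \<open>card N \<le> m\<close> by simp
    then show "card (Inr ` ?J \<union> Inl ` (N - {k})) = m - 1"
      unfolding eq using card_Inl_Inr_image[of "N - {k}" ?J] fin by simp
  qed
  show False by (rule no_three_mutual_exchanges[of Inl N "Inr ` ?J" x y z]) (use faces xyz in auto)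
qed

lemma clique_is_face:
  "\<sigma> \<subseteq> {1..m} \<Longrightarrow> (\<forall>x\<in>\<sigma>. \<forall>y\<in>\<sigma>. {x, y} \<in> K) \<Longrightarrow> \<sigma> \<in> K"
proof (induction "card \<sigma>" arbitrary: \<sigma> rule: less_induct)
  case less
  have fin: "finite \<sigma>" using less.prems(1) finite_subset by blast
  show ?case
  proof (cases "card \<sigma> \<le> 2")
    case True
    then consider "card \<sigma> = 0" | "card \<sigma> = 1" | "card \<sigma> = 2" by linarith
    then show ?thesis
    proof cases
      case 1
      then show ?thesis using fin empty_face by simp
    next
      case 2
      then obtain x where "\<sigma> = {x}" by (elim card_1_singletonE)
      then show ?thesis using less.prems(2) by auto
    next
      case 3
      then obtain x y where "\<sigma> = {x, y}" by (auto simp: card_2_iff)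
      then show ?thesis using less.prems(2) by auto
    qed
  next
    case False
    show ?thesis
    proof (rule ccontr)
      assume "\<sigma> \<notin> K"
      then obtain k where k: "k \<in> \<sigma>" "\<sigma> - {k} \<notin> K"
        using nonface_remove_vertex_nonface[OF less.prems(1)] False by auto
      have "\<sigma> - {k} \<in> K"
        using less.prems by (intro less.hyps[OF card_Diff1_less[OF fin k(1)]]) auto
      then show False using k(2) by simp
    qed
  qed
qed

lemma face_extends_to_codim_2: "I \<in> K \<Longrightarrow> \<exists>I'\<in>K. I \<subseteq> I' \<and> card ({1..m} - I') \<le> 2"
proof (induction "card ({1..m} - I)" arbitrary: I rule: less_induct)
  case less
  show ?case
  proof (cases "card ({1..m} - I) \<le> 2")
    case False
    then obtain k where k: "k \<in> {1..m} - I" "insert k I \<in> K"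
      using face_extends_by_vertex[OF less.prems] by auto
    have "card (({1..m} - I) - {k}) < card ({1..m} - I)"
      by (rule card_Diff1_less) (use k(1) in auto)
    moreover have "({1..m} - I) - {k} = {1..m} - insert k I" by auto
    ultimately have "card ({1..m} - insert k I) < card ({1..m} - I)" by simp
    then show ?thesis using less.hyps k(2) by blast
  qed (use less.prems in blast)
qed

lemma nonadjacent_Inl_same_colour:
  assumes "nonadjacent x y"
  shows "c (Inl x) = c (Inl y)"
proof -
  have xy: "x \<noteq> y" "{x} \<in> K" "{y} \<in> K" "{x, y} \<notin> K" using assms unfolding nonadjacent_def by auto
  have in_m: "x \<in> {1..m}" "y \<in> {1..m}" using assms nonadjacent_in_ground_set nonadjacent_sym by blast+
  let ?J = "{1..m} - {x, y}"
  have "{1..m} - ?J = {x, y}" using in_m by auto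
  then have J: "?J \<in> dual" using xy dual_face_iff by auto
  have "card ?J = m - 2" using xy in_m by (simp add: card_Diff_subset)
  then have "card (Inl ` {x} \<union> Inr ` ?J) = m - 1" using card_Inl_Inr_image[of "{x}" ?J] three_le_m by simp
  moreover have "Inl ` {x} \<union> Inr ` ?J \<in> bier m K" "Inl ` {y} \<union> Inr ` ?J \<in> bier m K"
    using xy J unfolding bier_face_iff by auto
  moreover have "(Inl ` {x} \<union> Inr ` ?J) - {Inl x} = (Inl ` {y} \<union> Inr ` ?J) - {Inl y}" by auto
  ultimately show ?thesis using exchange_same_colour by simp
qed

lemma nonadjacent_trans:
  assumes "nonadjacent x y" "nonadjacent y z" "x \<noteq> z"
  shows "nonadjacent x z"
proof -
  have "c (Inl x) = c (Inl z)" using assms(1,2) nonadjacent_Inl_same_colour by simp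
  then have "{x, z} \<notin> K" using Inl_edge_colours_differ assms(3) by blast
  then show ?thesis using assms unfolding nonadjacent_def by auto
qed

lemma Inr_same_colour_at_codim_2_face:
  assumes uv: "u \<noteq> v" "u \<in> {1..m}" "v \<in> {1..m}" and face: "{1..m} - {u, v} \<in> K"
    and nonfaces: "{1..m} - {u} \<notin> K" "{1..m} - {v} \<notin> K"
  shows "c (Inr u) = c (Inr v)"
proof -
  let ?I = "{1..m} - {u, v}"
  have "{u} \<in> dual" "{v} \<in> dual" using nonfaces uv dual_face_iff by auto
  then have "Inl ` ?I \<union> Inr ` {u} \<in> bier m K" "Inl ` ?I \<union> Inr ` {v} \<in> bier m K"
    using face unfolding bier_face_iff by auto
  moreover have "card ?I = m - 2" using uv by (simp add: card_Diff_subset)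
  then have "card (Inl ` ?I \<union> Inr ` {u}) = m - 1"
    using card_Inl_Inr_image[of ?I "{u}"] three_le_m by simp
  moreover have "(Inl ` ?I \<union> Inr ` {u}) - {Inr u} = (Inl ` ?I \<union> Inr ` {v}) - {Inr v}" by auto
  ultimately show ?thesis using exchange_same_colour by simp
qed

lemma nonneighbour_exchange_face:
  assumes I: "I \<in> K" "a \<in> I" and a': "nonadjacent a a'"
  shows "insert a' (I - {a}) \<in> K"
proof (rule clique_is_face)
  show "insert a' (I - {a}) \<subseteq> {1..m}"
    using face_subset[OF I(1)] nonadjacent_in_ground_set[OF nonadjacent_sym[OF a']] by auto
  have a'_edge: "{a', y} \<in> K" if y: "y \<in> I" "y \<noteq> a" for y
  proof (rule ccontr)
    assume "{a', y} \<notin> K"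
    moreover have "{y} \<in> K" "{a'} \<in> K" using face_downward_closed[OF I(1)] y a'
      unfolding nonadjacent_def by auto
    ultimately have "y = a' \<or> nonadjacent a' y" unfolding nonadjacent_def by auto
    then have "nonadjacent a y" using a' nonadjacent_trans y(2) by (metis nonadjacent_def)
    moreover have "{a, y} \<subseteq> I" using y I(2) by auto
    ultimately show False using face_downward_closed[OF I(1)] unfolding nonadjacent_def by blast
  qed
  show "\<forall>x\<in>insert a' (I - {a}). \<forall>y\<in>insert a' (I - {a}). {x, y} \<in> K"
    using a'_edge face_downward_closed[OF I(1)] a' unfolding nonadjacent_def
    by (auto simp: insert_commute)
qed

text \<open>Two distinct vertices that both have non-neighbours are non-adjacent: otherwise the
  exchange argument would give a' and a, which span an edge of the dual, the colour of b'.\<close>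

lemma nonadjacent_if_both_have_nonneighbours:
  assumes a': "nonadjacent a a'" and b': "nonadjacent b b'" and "a \<noteq> b"
  shows "nonadjacent a b"
proof (rule ccontr)
  assume not_ab: "\<not> nonadjacent a b"
  then have ab: "{a, b} \<in> K" using a' b' \<open>a \<noteq> b\<close> unfolding nonadjacent_def by auto
  have "a' \<noteq> b'"
  proof
    assume "a' = b'"
    then have "nonadjacent a' b" using b' nonadjacent_sym by simp
    then show False using nonadjacent_trans[OF a' _ \<open>a \<noteq> b\<close>] not_ab by blast
  qed
  then have distinct: "a \<noteq> a'" "b \<noteq> b'" "a' \<noteq> b" "b' \<noteq> a" "a' \<noteq> b'"
    using a' b' not_ab unfolding nonadjacent_def by (auto simp: insert_commute)
  have in_m: "a \<in> {1..m}" "b \<in> {1..m}" "a' \<in> {1..m}" "b' \<in> {1..m}"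
    using a' b' nonadjacent_in_ground_set nonadjacent_sym by blast+
  have nonface: "\<sigma> \<notin> K" if "{a, a'} \<subseteq> \<sigma> \<or> {b, b'} \<subseteq> \<sigma>" for \<sigma>
    using that face_downward_closed a' b' unfolding nonadjacent_def by blast
  obtain I where I: "I \<in> K" "{a, b} \<subseteq> I" "card ({1..m} - I) \<le> 2"
    using face_extends_to_codim_2[OF ab] by blast
  have "{a', b'} \<subseteq> {1..m} - I" using nonface[of I] I(1,2) in_m by auto
  then have "{a', b'} = {1..m} - I" using card_seteq[of "{1..m} - I"] I(3) distinct(5) by simp
  then have face1: "{1..m} - {a', b'} \<in> K" using I(1) face_subset by (metis Diff_Diff_Int inf.absorb_iff2)
  have face2: "{1..m} - {a, b'} \<in> K"
  proof -
    have "insert a' ({1..m} - {a', b'} - {a}) \<in> K"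
      using nonneighbour_exchange_face[OF face1 _ a'] in_m distinct by auto
    moreover have "insert a' ({1..m} - {a', b'} - {a}) = {1..m} - {a, b'}" using in_m distinct by auto
    ultimately show ?thesis by simp
  qed
  have "{1..m} - {a} \<notin> K" "{1..m} - {a'} \<notin> K" "{1..m} - {b'} \<notin> K" "{1..m} - {a, a'} \<notin> K"
    by (rule nonface; use in_m distinct \<open>a \<noteq> b\<close> in auto)+
  then have "c (Inr a') = c (Inr b')" "c (Inr a) = c (Inr b')" "{a, a'} \<in> dual"
    using Inr_same_colour_at_codim_2_face in_m distinct face1 face2 dual_face_iff by auto
  then show False using Inr_edge_colours_differ[OF distinct(1)] by simp
qed

lemma loose_vertices_nonadjacent:
  "x \<in> loose_vertices \<Longrightarrow> y \<in> loose_vertices \<Longrightarrow> x \<noteq> y \<Longrightarrow> nonadjacent x y"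
  unfolding loose_vertices_def using nonadjacent_if_both_have_nonneighbours by blast

lemma loose_vertices_subset: "loose_vertices \<subseteq> {1..m}"
  unfolding loose_vertices_def using nonadjacent_in_ground_set by blast

lemma ghosts_loose_vertices_disjoint: "ghosts \<inter> loose_vertices = {}"
  unfolding ghosts_def loose_vertices_def nonadjacent_def by blast

lemma K_eq_model_complex: "K = model_complex m loose_vertices ghosts"
proof (intro set_eqI iffI)
  fix \<sigma> assume \<sigma>: "\<sigma> \<in> K"
  have "\<sigma> \<inter> ghosts = {}" using face_downward_closed[OF \<sigma>] unfolding ghosts_def by blast
  moreover have "card (\<sigma> \<inter> loose_vertices) \<le> Suc 0"
  proof (subst card_le_Suc0_iff_eq)
    show "finite (\<sigma> \<inter> loose_vertices)" using finite_face[OF \<sigma>] by simp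
    show "\<forall>x\<in>\<sigma> \<inter> loose_vertices. \<forall>y\<in>\<sigma> \<inter> loose_vertices. x = y"
    proof (intro ballI, rule ccontr)
      fix x y assume xy: "x \<in> \<sigma> \<inter> loose_vertices" "y \<in> \<sigma> \<inter> loose_vertices" "x \<noteq> y"
      then have "nonadjacent x y" by (simp add: loose_vertices_nonadjacent)
      moreover have "{x, y} \<in> K" using face_downward_closed[OF \<sigma>, of "{x, y}"] xy by simp
      ultimately show False unfolding nonadjacent_def by simp
    qed
  qed
  ultimately show "\<sigma> \<in> model_complex m loose_vertices ghosts"
    using face_subset[OF \<sigma>] unfolding model_complex_def by simp
next
  fix \<sigma> assume \<sigma>: "\<sigma> \<in> model_complex m loose_vertices ghosts"
  then have sub: "\<sigma> \<subseteq> {1..m}" and no_ghost: "\<sigma> \<inter> ghosts = {}"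
    unfolding model_complex_def by auto
  then have vertex: "{x} \<in> K" if "x \<in> \<sigma>" for x using that unfolding ghosts_def by blast
  have "card (\<sigma> \<inter> loose_vertices) \<le> Suc 0" using \<sigma> unfolding model_complex_def by simp
  then have at_most_one: "\<forall>x\<in>\<sigma> \<inter> loose_vertices. \<forall>y\<in>\<sigma> \<inter> loose_vertices. x = y"
    using card_le_Suc0_iff_eq[of "\<sigma> \<inter> loose_vertices"] finite_subset[OF sub] by blast
  have "{x, y} \<in> K" if xy: "x \<in> \<sigma>" "y \<in> \<sigma>" for x y
  proof (cases "x = y")
    case False
    show ?thesis
    proof (rule ccontr)
      assume "{x, y} \<notin> K"
      then have "nonadjacent x y" using False vertex xy unfolding nonadjacent_def by simp
      then have "x \<in> loose_vertices" "y \<in> loose_vertices"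
        using nonadjacent_sym unfolding loose_vertices_def by blast+
      then show False using at_most_one xy False by blast
    qed
  qed (use vertex xy in simp)
  then show "\<sigma> \<in> K" using clique_is_face[OF sub] by blast
qed

lemma card_ghosts_le_2: "card ghosts \<le> 2"
proof -
  obtain I where "I \<in> K" "card ({1..m} - I) \<le> 2"
    using face_extends_to_codim_2[OF empty_face] by blast
  moreover have "ghosts \<subseteq> {1..m} - I"
    using face_downward_closed[OF \<open>I \<in> K\<close>] unfolding ghosts_def by auto
  ultimately show ?thesis using card_mono[of "{1..m} - I" ghosts] by simp
qed

lemma card_loose_vertices_bounds:
  assumes "loose_vertices \<noteq> {}"
  shows "2 \<le> card loose_vertices" "card ghosts + card loose_vertices \<le> 3"
proof -
  have fin: "finite ghosts" "finite loose_vertices"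
    using finite_subset[OF loose_vertices_subset] unfolding ghosts_def by simp_all
  obtain t where t: "t \<in> loose_vertices" using assms by blast
  then obtain y where ty: "nonadjacent t y" unfolding loose_vertices_def by blast
  then have "y \<in> loose_vertices" using nonadjacent_sym unfolding loose_vertices_def by blast
  moreover have "t \<noteq> y" using ty unfolding nonadjacent_def by simp
  ultimately show two: "2 \<le> card loose_vertices"
    using card_mono[OF fin(2), of "{t, y}"] t by simp
  have "{t} \<in> K" using ty unfolding nonadjacent_def by simp
  then obtain I where I: "I \<in> K" "{t} \<subseteq> I" "card ({1..m} - I) \<le> 2"
    using face_extends_to_codim_2 by blast
  have "s \<in> {1..m} - I" if s: "s \<in> loose_vertices - {t}" for s
  proof -
    have "nonadjacent t s" using s t loose_vertices_nonadjacent by auto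
    then have "{t, s} \<notin> K" "s \<in> {1..m}"
      using nonadjacent_in_ground_set nonadjacent_sym unfolding nonadjacent_def by blast+
    then show ?thesis using face_downward_closed[OF I(1), of "{t, s}"] I(2) by auto
  qed
  moreover have "ghosts \<subseteq> {1..m} - I"
    using face_downward_closed[OF I(1)] unfolding ghosts_def by auto
  ultimately have "ghosts \<union> (loose_vertices - {t}) \<subseteq> {1..m} - I" by blast
  then have "card (ghosts \<union> (loose_vertices - {t})) \<le> card ({1..m} - I)"
    by (intro card_mono) auto
  then have "card (ghosts \<union> (loose_vertices - {t})) \<le> 2" using I(3) by simp
  moreover have "ghosts \<inter> (loose_vertices - {t}) = {}" using ghosts_loose_vertices_disjoint by blast
  ultimately show "card ghosts + card loose_vertices \<le> 3"
    using card_Un_disjoint[of ghosts "loose_vertices - {t}"] fin t two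
    by (simp add: card_Diff_singleton)
qed

lemma not_one_ghost_two_loose: "\<not> (card ghosts = 1 \<and> card loose_vertices = 2)"
proof
  assume "card ghosts = 1 \<and> card loose_vertices = 2"
  then obtain g a b where g: "ghosts = {g}" and ab: "loose_vertices = {a, b}" "a \<noteq> b"
    by (auto simp: card_Suc_eq card_2_iff)
  have in_m: "g \<in> {1..m}" "a \<in> {1..m}" "b \<in> {1..m}"
    using g ab loose_vertices_subset unfolding ghosts_def by auto
  have distinct: "g \<noteq> a" "g \<noteq> b" using g ab ghosts_loose_vertices_disjoint by auto
  have face_iff: "\<sigma> \<in> K \<longleftrightarrow> \<sigma> \<subseteq> {1..m} \<and> g \<notin> \<sigma> \<and> \<not> (a \<in> \<sigma> \<and> b \<in> \<sigma>)" for \<sigma>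
    by (subst K_eq_model_complex) (auto simp: model_complex_def g ab card_Int_pair_le_1_iff)
  have faces: "{1..m} - {b, g} \<in> K" "{1..m} - {a, g} \<in> K"
    and nonfaces: "{1..m} - {a} \<notin> K" "{1..m} - {b} \<notin> K" "{1..m} - {g} \<notin> K"
      "{1..m} - {a, b} \<notin> K"
    unfolding face_iff using in_m distinct ab(2) by auto
  have "c (Inr b) = c (Inr g)" "c (Inr a) = c (Inr g)"
    using Inr_same_colour_at_codim_2_face in_m distinct faces nonfaces by auto
  moreover have "{a, b} \<in> dual" using in_m nonfaces(4) dual_face_iff by auto
  ultimately show False using Inr_edge_colours_differ[OF ab(2)] by simp
qed

lemma admissible_loose_vertices_ghosts: "admissible m loose_vertices ghosts"
proof -
  have fin: "finite ghosts" unfolding ghosts_def by simp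
  have "card ghosts \<in> {1, 2}" if "loose_vertices = {}"
  proof -
    have "ghosts \<noteq> {}"
    proof
      assume "ghosts = {}"
      then have "K = full_simplex m"
        using K_eq_model_complex that unfolding model_complex_def full_simplex_def by auto
      then show False using not_full by simp
    qed
    then have "0 < card ghosts" using fin by (simp add: card_gt_0_iff)
    then show ?thesis using card_ghosts_le_2 by auto
  qed
  moreover have "ghosts = {} \<and> card loose_vertices \<in> {2, 3}" if "loose_vertices \<noteq> {}"
  proof -
    have "card ghosts = 0"
      using card_loose_vertices_bounds[OF that] not_one_ghost_two_loose by arith
    then show ?thesis using card_loose_vertices_bounds[OF that] fin by auto
  qed
  moreover have "ghosts \<subseteq> {1..m}" unfolding ghosts_def by auto
  ultimately show ?thesis
    using ghosts_loose_vertices_disjoint loose_vertices_subset unfolding admissible_def by blast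
qed

end

section \<open>Colouring the Bier sphere of a model complex\<close>

locale bier_model = bier_sphere +
  fixes T G :: "nat set"
  assumes admissible: "admissible m T G" and K_eq: "K = model_complex m T G"
begin

lemma T_G_subset: "T \<subseteq> {1..m}" "G \<subseteq> {1..m}" "T \<inter> G = {}"
  using admissible unfolding admissible_def by auto

lemma finite_T_G: "finite T" "finite G"
  using finite_subset T_G_subset by auto

lemma face_iff: "\<sigma> \<in> K \<longleftrightarrow> \<sigma> \<subseteq> {1..m} \<and> \<sigma> \<inter> G = {} \<and> card (\<sigma> \<inter> T) \<le> 1"
  unfolding K_eq model_complex_def by simp

lemma Inl_vertex_not_ghost: "Inl x \<in> vertices (bier m K) \<Longrightarrow> x \<notin> G"
  by (auto simp: Inl_vertex_iff face_iff)

lemma Inr_ghost_vertex_card_ghosts: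
  assumes "Inr x \<in> vertices (bier m K)" "x \<in> G"
  shows "card G = 2"
proof -
  have T: "T = {}" and "card G \<in> {1, 2}" using assms(2) admissible unfolding admissible_def by auto
  moreover have "{1..m} - {x} \<notin> K" using assms(1) by (simp add: Inr_vertex_iff dual_face_iff)
  moreover have "{1..m} - {x} \<in> K" if "G = {x}" using that T by (simp add: face_iff)
  ultimately show ?thesis using assms(2) by (auto simp: card_1_singleton_iff)
qed

lemma no_Inl_edge_outside_cone_points:
  assumes "{x, y} \<in> K" "x \<noteq> y" "x \<in> T \<union> G" "y \<in> T \<union> G"
  shows False
proof -
  have "x \<in> T" "y \<in> T" using assms face_downward_closed[OF assms(1)] by (auto simp: face_iff)
  then have "{x, y} \<inter> T = {x, y}" by auto
  then show False using assms(1,2) by (simp add: face_iff)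
qed

lemma no_Inr_edge_outside_cone_points:
  assumes "{x, y} \<in> dual" "x \<noteq> y" "x \<in> T \<union> G" "y \<in> T \<union> G"
  shows False
proof -
  have "{1..m} - {x, y} \<in> K"
  proof (cases "T = {}")
    case True
    then have "{x, y} \<subseteq> G" "card G \<le> 2" using assms(3,4) admissible unfolding admissible_def by auto
    then have "{x, y} = G" using card_seteq[OF finite_T_G(2)] assms(2) by simp
    then show ?thesis using True by (auto simp: face_iff)
  next
    case False
    then have "G = {}" "card T \<le> 3" using admissible unfolding admissible_def by auto
    then have "{x, y} \<subseteq> T" using assms(3,4) by auto
    then have "card (T - {x, y}) \<le> 1" using \<open>card T \<le> 3\<close> assms(2) finite_T_G(1)
      by (simp add: card_Diff_subset)
    moreover have "({1..m} - {x, y}) \<inter> T = T - {x, y}" using T_G_subset by auto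
    ultimately show ?thesis using \<open>G = {}\<close> by (simp add: face_iff)
  qed
  then show False using assms(1) by (simp add: dual_face_iff)
qed

lemma Inl_Inr_edge_outside_cone_points:
  assumes "{x} \<in> K" "{y} \<in> dual" "x \<noteq> y" "x \<in> T \<union> G" "y \<in> T \<union> G"
  shows "card T = 3"
proof (rule ccontr)
  assume "card T \<noteq> 3"
  have "x \<in> T" using assms(1,4) by (auto simp: face_iff)
  then have "G = {}" "card T = 2" using admissible \<open>card T \<noteq> 3\<close> unfolding admissible_def by auto
  then have "T = {x, y}" using card_seteq[OF finite_T_G(1), of "{x, y}"] \<open>x \<in> T\<close> assms(3,5) by auto
  then have "{1..m} - {y} \<in> K" using T_G_subset assms(3) \<open>G = {}\<close> by (auto simp: face_iff Int_Diff)
  then show False using assms(2) by (simp add: dual_face_iff)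
qed

lemma edge_outside_cone_points:
  assumes edge: "{u, v} \<in> bier m K" "u \<noteq> v" and outside: "label u \<in> T \<union> G" "label v \<in> T \<union> G"
  shows "card T = 3 \<and> isl u \<noteq> isl v"
proof (cases u; cases v)
  fix x y assume "u = Inl x" "v = Inl y"
  then show ?thesis using edge outside no_Inl_edge_outside_cone_points by (auto simp: Inl_Inl_edge_iff)
next
  fix x y assume "u = Inr x" "v = Inr y"
  then show ?thesis using edge outside no_Inr_edge_outside_cone_points by (auto simp: Inr_Inr_edge_iff)
next
  fix x y assume "u = Inl x" "v = Inr y"
  then show ?thesis using edge outside Inl_Inr_edge_outside_cone_points by (auto simp: Inl_Inr_edge_iff)
next
  fix x y assume "u = Inr x" "v = Inl y"
  then show ?thesis using edge outside Inl_Inr_edge_outside_cone_points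
    by (auto simp: Inl_Inr_edge_iff insert_commute)
qed

text \<open>Colour the cone points i \<notin> T \<union> G and i' alike by an enumeration of the cone points,
  and all remaining vertices by one further colour, or by two (one for i, one for j') if T has
  three elements.\<close>

lemma model_complex_colourable: "\<exists>c. proper_colouring (bier m K) (m - 1) c"
proof -
  define S where "S = {1..m} - (T \<union> G)"
  obtain r where r: "bij_betw r S {0..<card S}"
    using ex_bij_betw_finite_nat[of S] unfolding S_def by blast
  have r_less: "r i < card S" if "i \<in> S" for i using r that unfolding bij_betw_def by auto
  have r_inj: "inj_on r S" using r unfolding bij_betw_def by simp
  have card_S: "card S + card T + card G = m"
    using card_Diff_subset[of "T \<union> G" "{1..m}"] card_Un_disjoint[of T G] card_mono[of "{1..m}" "T \<union> G"]
      T_G_subset finite_T_G unfolding S_def by auto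
  have adm: "T = {} \<and> card G \<in> {1, 2} \<or> G = {} \<and> card T \<in> {2, 3}"
    using admissible unfolding admissible_def by blast
  define col where
    "col v = (if label v \<in> S then r (label v) else card S + (if \<not> isl v \<and> card T = 3 then 1 else 0))"
    for v
  have "col v < m - 1" if v: "v \<in> vertices (bier m K)" for v
  proof (cases "label v \<in> S")
    case True
    then show ?thesis using r_less[OF True] card_S adm by (auto simp: col_def)
  next
    case False
    then have outside: "label v \<in> T \<union> G" using label_vertex_in_ground_set[OF v] unfolding S_def by blast
    have "2 \<le> card T + card G"
    proof (cases "label v \<in> T")
      case True
      then show ?thesis using adm by auto
    next
      case False
      then have "label v \<in> G" "v = Inr (label v)"
        using outside Inl_vertex_not_ghost v by (cases v; auto)+
      then show ?thesis using Inr_ghost_vertex_card_ghosts v by (metis le_add2)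
    qed
    then show ?thesis using False card_S adm three_le_m by (auto simp: col_def)
  qed
  moreover have "col u \<noteq> col v" if edge: "{u, v} \<in> bier m K" "u \<noteq> v" for u v
  proof -
    have labels: "label u \<noteq> label v" using label_injective_on_edge[OF edge] .
    have outside: "card T = 3 \<and> isl u \<noteq> isl v" if "label u \<notin> S" "label v \<notin> S"
    proof (rule edge_outside_cone_points[OF edge])
      have "u \<in> vertices (bier m K)" "v \<in> vertices (bier m K)"
        using vertex_of_bier_face[OF edge(1)] by auto
      then show "label u \<in> T \<union> G" "label v \<in> T \<union> G"
        using that label_vertex_in_ground_set unfolding S_def by blast+
    qed
    consider "label u \<in> S" "label v \<in> S" | "label u \<in> S" "label v \<notin> S"
      | "label u \<notin> S" "label v \<in> S" | "label u \<notin> S" "label v \<notin> S" by blast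
    then show ?thesis
    proof cases
      case 1
      then show ?thesis using labels inj_on_eq_iff[OF r_inj] by (simp add: col_def)
    next
      case 2
      then show ?thesis using r_less[OF 2(1)] by (simp add: col_def)
    next
      case 3
      then show ?thesis using r_less[OF 3(2)] by (simp add: col_def)
    next
      case 4
      then show ?thesis using outside by (auto simp: col_def)
    qed
  qed
  ultimately show ?thesis unfolding proper_colouring_def by blast
qed

end

theorem mainTheorem10:
  fixes m :: nat and K :: "nat set set"
  assumes "m \<ge> 3"
    and "simplicial_complex m K"
    and "K \<noteq> full_simplex m"
  shows "chromatic_number (bier m K) = m - 1 \<longleftrightarrow>
    (\<exists>\<pi> R. bij_betw \<pi> {1..m} {1..m} \<and> obtainable m R \<and> K = (\<lambda>\<sigma>. \<pi> ` \<sigma>) ` R)"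
proof -
  interpret bier_sphere m K using assms by unfold_locales
  have "chromatic_number (bier m K) = m - 1 \<longleftrightarrow> (\<exists>T G. admissible m T G \<and> K = model_complex m T G)"
  proof
    assume "chromatic_number (bier m K) = m - 1"
    then obtain c where "proper_colouring (bier m K) (m - 1) c"
      using chromatic_number_bier_eq_iff by blast
    then interpret bier_colouring m K c by unfold_locales
    show "\<exists>T G. admissible m T G \<and> K = model_complex m T G"
      using admissible_loose_vertices_ghosts K_eq_model_complex by blast
  next
    assume "\<exists>T G. admissible m T G \<and> K = model_complex m T G"
    then obtain T G where "admissible m T G" "K = model_complex m T G" by blast
    then interpret bier_model m K T G by unfold_locales
    show "chromatic_number (bier m K) = m - 1"
      using model_complex_colourable chromatic_number_bier_eq_iff by blast
  qed
  also have "\<dots> \<longleftrightarrow> (\<exists>\<pi> R. bij_betw \<pi> {1..m} {1..m} \<and> obtainable m R \<and> K = (\<lambda>\<sigma>. \<pi> ` \<sigma>) ` R)"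
    by (rule admissible_iff_obtainable_up_to_relabeling[OF assms(1)])
  finally show ?thesis .
qed

end
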